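(* Let $\mathbf{v}\in K(\mathbb{F}_e)$ be a Chern character of positive rank, and assume $\Delta(\mathbf{v})\geq 1/4$ if $e=0$, $\Delta(\mathbf{v})\geq 1/8$ if $e=1$, and $\Delta(\mathbf{v})\geq 0$ if $e\geq 2$. Then there exists a line bundle $L$ on $\mathbb{F}_e$ such that $\chi(\mathbf{v}(-L))\geq 0$, $\chi(\mathbf{v}(-L-E))\leq 0$, $\chi(\mathbf{v}(-L-F))\leq 0$, and $\chi(\mathbf{v}(-L-E-F))\leq 0$.
   Context: $\mathbb{F}_e=\mathbb{P}(\mathcal{O}_{\mathbb{P}^1}\oplus\mathcal{O}_{\mathbb{P}^1}(e))$, $e\ge 0$, with fiber class $F$ and section class $E$, $E^2=-e$, $F^2=0$, $E\cdot F=1$. For a character of positive rank $r$: $\nu=c_1/r$, $\Delta=\frac12\nu^2-\mathrm{ch}_2/r$; $\mathbf{v}(D)=\mathbf{v}\cdot\mathrm{ch}\,\mathcal{O}(D)$. *)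

theory Defs
  imports Complex_Main
begin

text \<open>Numerical Chern characters on the Hirzebruch surface F_e.
  Divisor classes are written in the basis (E, F): the pair (a, b) means aE + bF,
  with E^2 = -e, F^2 = 0, E.F = 1.\<close>

definition inter :: "nat \<Rightarrow> real \<times> real \<Rightarrow> real \<times> real \<Rightarrow> real" where
  "inter e D D' = - real e * fst D * fst D' + fst D * snd D' + snd D * fst D'"

record chern =
  rk :: int
  c1E :: int
  c1F :: int
  ch2 :: real

definition c1 :: "chern \<Rightarrow> real \<times> real" where
  "c1 v = (real_of_int (c1E v), real_of_int (c1F v))"

text \<open>v lies in (the image under ch of) K(F_e): ch2 = c1^2/2 - c2 with c2 an integer.\<close>
definition is_chern_char :: "nat \<Rightarrow> chern \<Rightarrow> bool" where
  "is_chern_char e v \<longleftrightarrow> (\<exists>c2::int. ch2 v = inter e (c1 v) (c1 v) / 2 - real_of_int c2)"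

text \<open>v(D) = v . ch O(D), for the line bundle D = xE + yF.\<close>
definition twist :: "nat \<Rightarrow> chern \<Rightarrow> int \<Rightarrow> int \<Rightarrow> chern" where
  "twist e v x y = \<lparr> rk = rk v, c1E = c1E v + rk v * x, c1F = c1F v + rk v * y,
     ch2 = ch2 v + inter e (c1 v) (real_of_int x, real_of_int y)
           + real_of_int (rk v) * inter e (real_of_int x, real_of_int y) (real_of_int x, real_of_int y) / 2 \<rparr>"

text \<open>Euler characteristic via Riemann-Roch: chi = r chi(O) + c1.(-K)/2 + ch2,
  with chi(O) = 1 and -K = 2E + (e+2)F.\<close>
definition chi :: "nat \<Rightarrow> chern \<Rightarrow> real" where
  "chi e v = real_of_int (rk v) + inter e (c1 v) (2, real e + 2) / 2 + ch2 v"

definition discr :: "nat \<Rightarrow> chern \<Rightarrow> real" where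
  "discr e v = (let r = real_of_int (rk v); nu = (fst (c1 v) / r, snd (c1 v) / r)
               in inter e nu nu / 2 - ch2 v / r)"

end

theory Submission
  imports Defs
begin

text \<open>Writing \<open>c\<^sub>1(v)/r = sE + tF\<close>, Riemann-Roch gives
  \<open>\<chi>(v) = r ((s+1)(t+1) - e s(s+1)/2 - \<Delta>)\<close>, and twisting by \<open>O(pE+qF)\<close> shifts \<open>(s, t)\<close>
  by \<open>(p, q)\<close>. Twist first so that \<open>s \<in> (-1, 0]\<close>. In \<open>t\<close> the bracket is affine with slope
  \<open>s + 1 > 0\<close>, so a further twist along \<open>F\<close> gives \<open>\<chi>(v(-L)) \<ge> 0 \<ge> \<chi>(v(-L-F))\<close>. The two
  remaining signs reduce to \<open>\<Delta> \<ge> (s+1)(-s)(1 - e/2)\<close>, whose right-hand side is at most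
  \<open>1/4 - e/8\<close> for \<open>e \<le> 1\<close> and at most \<open>0\<close> for \<open>e \<ge> 2\<close>; this is where the bounds on
  \<open>\<Delta>\<close> come from.\<close>

definition reduced_chi :: "nat \<Rightarrow> real \<Rightarrow> real \<Rightarrow> real \<Rightarrow> real" where
  "reduced_chi e \<Delta> s t = (s + 1) * (t + 1) - real e * s * (s + 1) / 2 - \<Delta>"

lemma chi_twist:
  assumes "rk v > 0"
  shows "chi e (twist e v p q) =
    rk v * reduced_chi e (discr e v) (c1E v / rk v + p) (c1F v / rk v + q)"
  using assms
  by (simp add: chi_def twist_def discr_def c1_def inter_def reduced_chi_def Let_def field_simps)

lemma discr_ge_fractional_bound:
  fixes s \<Delta> :: real
  assumes "e = 0 \<longrightarrow> \<Delta> \<ge> 1/4" "e = 1 \<longrightarrow> \<Delta> \<ge> 1/8" "e \<ge> 2 \<longrightarrow> \<Delta> \<ge> 0"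
    and "-1 < s" "s \<le> 0"
  shows "(s + 1) * (- s) * (1 - real e / 2) \<le> \<Delta>"
proof -
  have le_quarter: "(s + 1) * (- s) \<le> 1/4"
  proof -
    have "0 \<le> (s + 1/2)\<^sup>2" by simp
    then show ?thesis by (simp add: power2_eq_square algebra_simps)
  qed
  have nonneg: "0 \<le> (s + 1) * (- s)"
    using assms(4,5) by (simp add: mult_nonneg_nonpos)
  consider "e = 0" | "e = 1" | "e \<ge> 2" by linarith
  then show ?thesis
  proof cases
    case 3
    then have "1 - real e / 2 \<le> 0" by simp
    with nonneg have "(s + 1) * (- s) * (1 - real e / 2) \<le> 0"
      by (rule mult_nonneg_nonpos)
    with assms(3) 3 show ?thesis by linarith
  qed (use assms(1,2) le_quarter in simp_all)
qed

lemma reduced_chi_signs: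
  fixes s t \<Delta> :: real
  assumes "-1 < s" "s \<le> 0"
    and bound: "(s + 1) * (- s) * (1 - real e / 2) \<le> \<Delta>"
    and below: "(s + 1) * t < \<Delta> + real e * s * (s + 1) / 2"
    and above: "\<Delta> + real e * s * (s + 1) / 2 \<le> (s + 1) * (t + 1)"
  shows "reduced_chi e \<Delta> s t \<ge> 0" "reduced_chi e \<Delta> s (t - 1) \<le> 0"
    "reduced_chi e \<Delta> (s - 1) (t - 1) \<le> 0" "reduced_chi e \<Delta> (s - 1) t \<le> 0"
proof -
  define D where "D = \<Delta> + real e * s * (s + 1) / 2"
  show "reduced_chi e \<Delta> s t \<ge> 0" "reduced_chi e \<Delta> s (t - 1) \<le> 0"
    using below above by (simp_all add: reduced_chi_def algebra_simps)
  have "s * ((s + 1) * (t + 1)) \<le> s * D"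
    using above assms(2) by (simp add: D_def mult_left_mono_neg)
  moreover have "(s + 1) * reduced_chi e \<Delta> (s - 1) (t - 1)
      = s * ((s + 1) * (t + 1)) - s * D + ((s + 1) * (- s) * (1 - real e / 2) - \<Delta>)"
    by (simp add: reduced_chi_def D_def field_simps)
  ultimately have "(s + 1) * reduced_chi e \<Delta> (s - 1) (t - 1) \<le> 0"
    using bound by linarith
  then show corner: "reduced_chi e \<Delta> (s - 1) (t - 1) \<le> 0"
    using assms(1) by (simp add: mult_le_0_iff)
  have "reduced_chi e \<Delta> (s - 1) t = reduced_chi e \<Delta> (s - 1) (t - 1) + s"
    by (simp add: reduced_chi_def algebra_simps)
  then show "reduced_chi e \<Delta> (s - 1) t \<le> 0"
    using corner assms(2) by linarith
qed

lemma exists_int_shift_slope_interval: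
  fixes b c D :: real
  assumes "c > 0"
  shows "\<exists>y::int. c * (b - y) < D \<and> D \<le> c * (b - y + 1)"
proof
  define y where "y = \<lfloor>b + 1 - D / c\<rfloor>"
  have "b - y < D / c" "D / c \<le> b - y + 1"
    unfolding y_def by linarith+
  then show "c * (b - y) < D \<and> D \<le> c * (b - y + 1)"
    using assms by (simp add: field_simps)
qed

theorem lemma4p5:
  fixes e :: nat and v :: chern
  assumes "is_chern_char e v"
    and "rk v > 0"
    and "e = 0 \<longrightarrow> discr e v \<ge> 1/4"
    and "e = 1 \<longrightarrow> discr e v \<ge> 1/8"
    and "e \<ge> 2 \<longrightarrow> discr e v \<ge> 0"
  shows "\<exists>x y :: int.
           chi e (twist e v (- x) (- y)) \<ge> 0 \<and>
           chi e (twist e v (- x - 1) (- y)) \<le> 0 \<and>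
           chi e (twist e v (- x) (- y - 1)) \<le> 0 \<and>
           chi e (twist e v (- x - 1) (- y - 1)) \<le> 0"
proof -
  define a where "a = c1E v / rk v"
  define b where "b = c1F v / rk v"
  define \<Delta> where "\<Delta> = discr e v"
  define x where "x = \<lceil>a\<rceil>"
  have s: "-1 < a - x" "a - x \<le> 0"
    unfolding x_def by linarith+
  obtain y :: int where
    "(a - x + 1) * (b - y) < \<Delta> + real e * (a - x) * (a - x + 1) / 2"
    "\<Delta> + real e * (a - x) * (a - x + 1) / 2 \<le> (a - x + 1) * (b - y + 1)"
    using exists_int_shift_slope_interval[of "a - x + 1"] s by auto
  have "(a - x + 1) * (- (a - x)) * (1 - real e / 2) \<le> \<Delta>"
    using discr_ge_fractional_bound[OF assms(3-5) s] by (simp add: \<Delta>_def)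
  note signs = reduced_chi_signs[OF s this \<open>(a - x + 1) * (b - y) < _\<close> \<open>_ \<le> (a - x + 1) * (b - y + 1)\<close>]
  have chi_eq: "\<And>p q. chi e (twist e v p q) = rk v * reduced_chi e \<Delta> (a + p) (b + q)"
    unfolding a_def b_def \<Delta>_def by (rule chi_twist[OF assms(2)])
  show ?thesis
    apply (rule exI[of _ x], rule exI[of _ y])
    using signs assms(2) by (simp add: chi_eq algebra_simps zero_le_mult_iff mult_le_0_iff)
qed

end
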